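(* Let $n=2^r$ and $m>n$. Any Sherali–Adams refutation of the binary $\mathrm{PHP}^m_n$ has to contain at least $e^{n/(32\log_2^2 n)}$ terms.
   Context: Binary Pigeonhole Principle $\mathrm{PHP}^m_n$ ($n=2^r$): pigeons $[m]$, holes $[n]$ with distinct $r$-bit representations $a_1\dots a_r$; variables $P_{i,j}$ ($i\in[m]$, $j\in[r]$); $X^1=X$, $X^0=\neg X$. Clauses: for every hole $a$ and pigeons $i\ne i'$, $\bigvee_j P_{i,j}^{1-a_j}\vee\bigvee_j P_{i',j}^{1-a_j}$. Sherali–Adams (SA): for every conjunction $D$ of literals (as a set; $\emptyset$ empty) there is a real variable (term) $Z_D$, $Z_\emptyset=1$. Lifts by $D$: of a clause $l_1\vee\dots\vee l_t$, $Z_{l_1\wedge D}+\dots+Z_{l_t\wedge D}\ge Z_D$; of negation equalities, $Z_{v\wedge D}+Z_{\neg v\wedge D}=Z_D$; of bounds, $0\le Z_{l\wedge D}\le Z_D$. An SA refutation is a set of such lifted constraints with empty common real solution set; the terms it contains are the variables $Z_D$ occurring in it. *)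

theory Defs
  imports Complex_Main
begin

text \<open>Variables P_{i,j} are pairs (i,j) with i < m (pigeon), j < r (bit), 0-based.
  A literal is (v, b): (v, True) is the positive literal v, (v, False) is its negation.
  A conjunction D of literals is a set of literals; the SA term Z_D is Z D.\<close>

type_synonym var = "nat \<times> nat"
type_synonym lit = "var \<times> bool"

definition lits :: "nat \<Rightarrow> nat \<Rightarrow> lit set" where
  "lits m r = {((i, j), b). i < m \<and> j < r}"

text \<open>Clauses of binary PHP: for a hole a (bits a j, j < r) and pigeons i \<noteq> i',
  the clause of literals P_{i,j}^{1-a_j} and P_{i',j}^{1-a_j}.  The literal
  X^{1-a_j} is positive iff a_j = 0, i.e. its polarity is \<not> a j.\<close>

definition bphp_clause :: "nat \<Rightarrow> nat \<Rightarrow> lit set \<Rightarrow> bool" where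
  "bphp_clause m r C \<longleftrightarrow>
     (\<exists>a :: nat \<Rightarrow> bool. \<exists>i i'. i < m \<and> i' < m \<and> i \<noteq> i' \<and>
        C = {((i, j), \<not> a j) | j. j < r} \<union> {((i', j), \<not> a j) | j. j < r})"

text \<open>Lifted SA constraints: lift of a clause C by D, lift of the negation
  equality for variable v by D, lift of the bounds for literal l by D.\<close>

datatype sa_constr =
    ClauseLift "lit set" "lit set"
  | NegLift var "lit set"
  | BoundLift lit "lit set"

fun sa_valid :: "nat \<Rightarrow> nat \<Rightarrow> sa_constr \<Rightarrow> bool" where
  "sa_valid m r (ClauseLift C D) \<longleftrightarrow> bphp_clause m r C \<and> D \<subseteq> lits m r"
| "sa_valid m r (NegLift v D) \<longleftrightarrow> fst v < m \<and> snd v < r \<and> D \<subseteq> lits m r"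
| "sa_valid m r (BoundLift l D) \<longleftrightarrow> l \<in> lits m r \<and> D \<subseteq> lits m r"

fun sa_sat :: "(lit set \<Rightarrow> real) \<Rightarrow> sa_constr \<Rightarrow> bool" where
  "sa_sat Z (ClauseLift C D) \<longleftrightarrow> (\<Sum>l\<in>C. Z (insert l D)) \<ge> Z D"
| "sa_sat Z (NegLift v D) \<longleftrightarrow> Z (insert (v, True) D) + Z (insert (v, False) D) = Z D"
| "sa_sat Z (BoundLift l D) \<longleftrightarrow> 0 \<le> Z (insert l D) \<and> Z (insert l D) \<le> Z D"

fun sa_terms :: "sa_constr \<Rightarrow> lit set set" where
  "sa_terms (ClauseLift C D) = insert D ((\<lambda>l. insert l D) ` C)"
| "sa_terms (NegLift v D) = {D, insert (v, True) D, insert (v, False) D}"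
| "sa_terms (BoundLift l D) = {D, insert l D}"

definition sa_refutation :: "nat \<Rightarrow> nat \<Rightarrow> sa_constr set \<Rightarrow> bool" where
  "sa_refutation m r S \<longleftrightarrow>
     (\<forall>c\<in>S. sa_valid m r c) \<and> \<not> (\<exists>Z. Z {} = 1 \<and> (\<forall>c\<in>S. sa_sat Z c))"

definition sa_num_terms :: "sa_constr set \<Rightarrow> nat" where
  "sa_num_terms S = card (\<Union>c\<in>S. sa_terms c)"

end

(*
  A random restriction gives every pigeon i a type tau i = (j, b), uniform among the 2r
  choices, and confines it to the holes whose j-th bit is b; a conjunction mentioning
  p pigeons survives with probability at most (1 - 1/(2r))^p.  With fewer than exp (k/(2r))
  terms some restriction therefore falsifies every term mentioning at least k pigeons.
  Reserve pairwise disjoint blocks of s = k + 1 holes for the 2r types (possible as long as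
  4 r s <= 2^r), and let Z D be the probability that a uniformly random injective placement
  of the pigeons of D into the blocks of their types satisfies D.  Since every placement of
  at most s pigeons extends in equally many ways, Z D does not depend on which superset of
  the pigeons of D is placed; this makes every lifted constraint with a small lifting term
  hold, while constraints lifted by a falsified term vanish identically.  Choosing
  k ~ n / (4 log n) gives the bound for n >= 64; smaller n only need one or two terms.
*)
theory Submission
  imports Defs "HOL-Library.FuncSet"
begin

section \<open>Counting typed injections\<close>

definition fraction :: "'a set \<Rightarrow> ('a \<Rightarrow> bool) \<Rightarrow> real" where
  "fraction G \<Phi> = card {x \<in> G. \<Phi> x} / card G"

lemma fraction_nonneg: "0 \<le> fraction G \<Phi>"
  by (simp add: fraction_def)

lemma fraction_conj_add:
  assumes "finite G"
  shows "fraction G (\<lambda>x. \<Psi> x \<and> \<Phi> x) + fraction G (\<lambda>x. \<not> \<Psi> x \<and> \<Phi> x) = fraction G \<Phi>"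
proof -
  have "{x \<in> G. \<Phi> x} = {x \<in> G. \<Psi> x \<and> \<Phi> x} \<union> {x \<in> G. \<not> \<Psi> x \<and> \<Phi> x}" by blast
  then have "card {x \<in> G. \<Phi> x} = card {x \<in> G. \<Psi> x \<and> \<Phi> x} + card {x \<in> G. \<not> \<Psi> x \<and> \<Phi> x}"
    using assms by (simp add: card_Un_disjoint disjoint_iff)
  then show ?thesis
    by (simp add: fraction_def add_divide_distrib)
qed

lemma fraction_mono:
  assumes "finite G" "\<And>x. x \<in> G \<Longrightarrow> \<Phi> x \<Longrightarrow> \<Psi> x"
  shows "fraction G \<Phi> \<le> fraction G \<Psi>"
proof -
  have "card {x \<in> G. \<Phi> x} \<le> card {x \<in> G. \<Psi> x}"
    using assms by (intro card_mono) auto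
  then show ?thesis
    by (simp add: fraction_def divide_right_mono)
qed

lemma fraction_le_sum:
  assumes "finite G" "finite C" "\<And>x. x \<in> G \<Longrightarrow> \<Phi> x \<Longrightarrow> \<exists>c\<in>C. \<Psi> c x"
  shows "fraction G \<Phi> \<le> (\<Sum>c\<in>C. fraction G (\<Psi> c))"
proof -
  have "card {x \<in> G. \<Phi> x} \<le> card (\<Union>c\<in>C. {x \<in> G. \<Psi> c x})"
    using assms by (intro card_mono) auto
  also have "\<dots> \<le> (\<Sum>c\<in>C. card {x \<in> G. \<Psi> c x})"
    using assms(2) by (rule card_UN_le)
  finally have "real (card {x \<in> G. \<Phi> x}) \<le> (\<Sum>c\<in>C. real (card {x \<in> G. \<Psi> c x}))"
    unfolding of_nat_sum[symmetric] of_nat_le_iff .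
  then show ?thesis
    unfolding fraction_def sum_divide_distrib[symmetric] by (rule divide_right_mono) simp
qed

definition typed_injections :: "('p \<Rightarrow> 't) \<Rightarrow> ('t \<Rightarrow> 'h set) \<Rightarrow> 'p set \<Rightarrow> ('p \<Rightarrow> 'h) set" where
  "typed_injections \<tau> B P = {g \<in> PiE P (\<lambda>p. B (\<tau> p)). inj_on g P}"

lemma finite_typed_injections:
  "finite P \<Longrightarrow> (\<And>t. finite (B t)) \<Longrightarrow> finite (typed_injections \<tau> B P)"
  unfolding typed_injections_def
  by (rule finite_subset[of _ "PiE P (\<lambda>p. B (\<tau> p))"]) (auto intro: finite_PiE)

lemma typed_injections_empty: "typed_injections \<tau> B {} = {\<lambda>_. undefined}"
  by (auto simp: typed_injections_def)

lemma typed_injections_insert: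
  assumes "q \<notin> P"
  shows "typed_injections \<tau> B (insert q P)
    = (\<lambda>(g, h). g(q := h)) ` (SIGMA g:typed_injections \<tau> B P. B (\<tau> q) - g ` P)"
proof (intro equalityI subsetI)
  fix f assume f: "f \<in> typed_injections \<tau> B (insert q P)"
  define g where "g = f(q := undefined)"
  have "g \<in> typed_injections \<tau> B P" "f q \<in> B (\<tau> q) - g ` P" "f = g(q := f q)"
    using f assms by (auto simp: typed_injections_def g_def PiE_iff extensional_def inj_on_def)
  then show "f \<in> (\<lambda>(g, h). g(q := h)) ` (SIGMA g:typed_injections \<tau> B P. B (\<tau> q) - g ` P)"
    by (intro image_eqI[of _ _ "(g, f q)"]) auto
next
  fix f assume "f \<in> (\<lambda>(g, h). g(q := h)) ` (SIGMA g:typed_injections \<tau> B P. B (\<tau> q) - g ` P)"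
  then obtain g h where "g \<in> typed_injections \<tau> B P" "h \<in> B (\<tau> q) - g ` P" "f = g(q := h)"
    by auto
  then show "f \<in> typed_injections \<tau> B (insert q P)"
    using assms by (auto simp: typed_injections_def PiE_iff inj_on_def)
qed

lemma card_block_diff_image:
  assumes "g \<in> typed_injections \<tau> B P" "finite (B (\<tau> q))"
    and "\<And>t t'. t \<noteq> t' \<Longrightarrow> B t \<inter> B t' = {}"
  shows "card (B (\<tau> q) - g ` P) = card (B (\<tau> q)) - card {p \<in> P. \<tau> p = \<tau> q}"
proof -
  have "B (\<tau> q) \<inter> g ` P = g ` {p \<in> P. \<tau> p = \<tau> q}"
    using assms(1,3) by (fastforce simp: typed_injections_def PiE_iff)
  moreover have "card (g ` {p \<in> P. \<tau> p = \<tau> q}) = card {p \<in> P. \<tau> p = \<tau> q}"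
    using assms(1) by (intro card_image) (auto simp: typed_injections_def intro: inj_on_subset)
  ultimately show ?thesis
    using assms(2) by (metis card_Diff_subset_Int finite_Int)
qed

lemma card_typed_injections_insert:
  assumes "finite P" "q \<notin> P" "\<And>t. finite (B t)" "\<And>t t'. t \<noteq> t' \<Longrightarrow> B t \<inter> B t' = {}"
    and "\<And>g h. \<Phi> (g(q := h)) = \<Phi> g"
  shows "card {g \<in> typed_injections \<tau> B (insert q P). \<Phi> g}
    = card {g \<in> typed_injections \<tau> B P. \<Phi> g} * (card (B (\<tau> q)) - card {p \<in> P. \<tau> p = \<tau> q})"
proof -
  let ?upd = "\<lambda>(g, h). g(q := h)"
  let ?ext = "SIGMA g:{g \<in> typed_injections \<tau> B P. \<Phi> g}. B (\<tau> q) - g ` P"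
  have "{g \<in> typed_injections \<tau> B (insert q P). \<Phi> g} = ?upd ` ?ext"
    using assms(5) by (auto simp: typed_injections_insert[OF assms(2)])
  moreover have "inj_on ?upd ?ext"
  proof (rule inj_onI, clarify)
    fix g h g' h'
    assume "g \<in> typed_injections \<tau> B P" "g' \<in> typed_injections \<tau> B P"
      and eq: "g(q := h) = g'(q := h')"
    then have "g q = g' q"
      using assms(2) unfolding typed_injections_def by (metis (no_types, lifting) PiE_arb mem_Collect_eq)
    then show "g = g' \<and> h = h'"
      using eq by (metis fun_upd_same fun_upd_triv fun_upd_upd)
  qed
  moreover have "finite {g \<in> typed_injections \<tau> B P. \<Phi> g}"
    using assms(1,3) by (simp add: finite_typed_injections)
  ultimately show ?thesis
    using assms(3,4) by (simp add: card_image card_SigmaI card_block_diff_image)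
qed

lemma fraction_typed_injections_insert:
  assumes "finite P" "q \<notin> P" "\<And>t. finite (B t)" "\<And>t t'. t \<noteq> t' \<Longrightarrow> B t \<inter> B t' = {}"
    and "card {p \<in> P. \<tau> p = \<tau> q} < card (B (\<tau> q))"
    and "\<And>g h. \<Phi> (g(q := h)) = \<Phi> g"
  shows "fraction (typed_injections \<tau> B (insert q P)) \<Phi> = fraction (typed_injections \<tau> B P) \<Phi>"
proof -
  have "card (typed_injections \<tau> B (insert q P))
      = card (typed_injections \<tau> B P) * (card (B (\<tau> q)) - card {p \<in> P. \<tau> p = \<tau> q})"
    using card_typed_injections_insert[OF assms(1-4), where \<Phi>="\<lambda>_. True"] by simp
  then show ?thesis
    using assms(5) by (simp add: fraction_def card_typed_injections_insert[OF assms(1-4,6)])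
qed

lemma fraction_typed_injections_superset:
  assumes "finite P'" "P \<subseteq> P'" "\<And>t. finite (B t)" "\<And>t t'. t \<noteq> t' \<Longrightarrow> B t \<inter> B t' = {}"
    and room: "\<And>p. p \<in> P' \<Longrightarrow> card {p' \<in> P'. \<tau> p' = \<tau> p} \<le> card (B (\<tau> p))"
    and local: "\<And>g g'. (\<And>p. p \<in> P \<Longrightarrow> g p = g' p) \<Longrightarrow> \<Phi> g = \<Phi> g'"
  shows "fraction (typed_injections \<tau> B P') \<Phi> = fraction (typed_injections \<tau> B P) \<Phi>"
proof -
  have "fraction (typed_injections \<tau> B (P \<union> A)) \<Phi> = fraction (typed_injections \<tau> B P) \<Phi>"
    if "A \<subseteq> P' - P" for A
    using finite_subset[OF that finite_Diff[OF assms(1)]] that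
  proof (induction A rule: finite_induct)
    case empty
    then show ?case by simp
  next
    case (insert q A)
    have q: "q \<notin> P \<union> A" "q \<in> P'"
      using insert.hyps(2) insert.prems by auto
    have fin: "finite (P \<union> A)"
      using insert.hyps(1) finite_subset[OF assms(2,1)] by simp
    have "{p \<in> P \<union> A. \<tau> p = \<tau> q} \<subset> {p \<in> P'. \<tau> p = \<tau> q}"
      using q insert.prems assms(2) by auto
    then have "card {p \<in> P \<union> A. \<tau> p = \<tau> q} < card {p \<in> P'. \<tau> p = \<tau> q}"
      using assms(1) by (intro psubset_card_mono) auto
    also have "\<dots> \<le> card (B (\<tau> q))"
      using room q(2) .
    finally have "fraction (typed_injections \<tau> B (insert q (P \<union> A))) \<Phi>
        = fraction (typed_injections \<tau> B (P \<union> A)) \<Phi>"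
      using q(1) by (intro fraction_typed_injections_insert[OF fin q(1) assms(3,4)] local) auto
    then show ?case
      using insert.IH insert.prems by simp
  qed
  from this[of "P' - P"] show ?thesis
    using assms(2) by (simp add: Un_absorb1)
qed

section \<open>A pseudo-expectation from hole blocks\<close>

lemma finite_lits: "finite (lits m r)"
proof -
  have "lits m r = ({..<m} \<times> {..<r}) \<times> UNIV"
    by (auto simp: lits_def)
  then show ?thesis by simp
qed

definition pigeons :: "lit set \<Rightarrow> nat set" where
  "pigeons D = (\<lambda>l. fst (fst l)) ` D"

definition satisfies :: "(nat \<Rightarrow> nat \<Rightarrow> bool) \<Rightarrow> lit set \<Rightarrow> bool" where
  "satisfies g D \<longleftrightarrow> (\<forall>((i, j), b) \<in> D. g i j = b)"

definition falsifies :: "(nat \<Rightarrow> nat \<times> bool) \<Rightarrow> lit set \<Rightarrow> bool" where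
  "falsifies \<tau> D \<longleftrightarrow> (\<exists>i j b. ((i, j), b) \<in> D \<and> \<tau> i = (j, \<not> b))"

lemma pigeons_empty [simp]: "pigeons {} = {}"
  by (simp add: pigeons_def)

lemma pigeons_insert [simp]: "pigeons (insert ((i, j), b) D) = insert i (pigeons D)"
  by (simp add: pigeons_def)

lemma pigeons_subset: "D \<subseteq> lits m r \<Longrightarrow> pigeons D \<subseteq> {..<m}"
  by (auto simp: pigeons_def lits_def)

lemma finite_pigeons: "D \<subseteq> lits m r \<Longrightarrow> finite (pigeons D)"
  by (rule finite_subset[OF pigeons_subset]) auto

lemma satisfies_empty [simp]: "satisfies g {}"
  by (simp add: satisfies_def)

lemma satisfies_insert [simp]:
  "satisfies g (insert ((i, j), b) D) \<longleftrightarrow> g i j = b \<and> satisfies g D"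
  by (simp add: satisfies_def)

lemma satisfiesD: "satisfies g D \<Longrightarrow> ((i, j), b) \<in> D \<Longrightarrow> g i j = b"
  by (auto simp: satisfies_def)

lemma satisfies_cong: "(\<And>i. i \<in> pigeons D \<Longrightarrow> g i = g' i) \<Longrightarrow> satisfies g D = satisfies g' D"
  by (force simp: satisfies_def pigeons_def)

lemma falsifies_mono: "falsifies \<tau> D \<Longrightarrow> D \<subseteq> X \<Longrightarrow> falsifies \<tau> X"
  by (auto simp: falsifies_def)

fun lifting_set :: "sa_constr \<Rightarrow> lit set" where
  "lifting_set (ClauseLift C D) = D"
| "lifting_set (NegLift v D) = D"
| "lifting_set (BoundLift l D) = D"

lemma lifting_set_in_sa_terms: "lifting_set c \<in> sa_terms c"
  by (cases c) auto

lemma lifting_set_subset: "X \<in> sa_terms c \<Longrightarrow> lifting_set c \<subseteq> X"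
  by (cases c) auto

lemma sa_sat_if_vanishing:
  assumes "\<And>X. X \<in> sa_terms c \<Longrightarrow> Z X = 0"
  shows "sa_sat Z c"
proof (cases c)
  case (ClauseLift C D)
  then have "Z D = 0" "\<And>l. l \<in> C \<Longrightarrow> Z (insert l D) = 0"
    using assms by auto
  then show ?thesis
    using ClauseLift by simp
qed (use assms in auto)

text \<open>\<open>\<tau> i = (j, b)\<close> confines pigeon \<open>i\<close> to holes (bit vectors of length \<open>r\<close>) whose
  \<open>j\<close>-th bit is \<open>b\<close>, and \<open>B (j, b)\<close> is a block of \<open>s\<close> such holes.  \<open>Z D\<close> is the probability
  that a uniformly random injection placing every pigeon of \<open>D\<close> into the block of its type
  satisfies \<open>D\<close>.\<close>

locale php_blocks =
  fixes m r s :: nat and \<tau> :: "nat \<Rightarrow> nat \<times> bool" and B :: "nat \<times> bool \<Rightarrow> (nat \<Rightarrow> bool) set"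
  assumes finite_block: "finite (B t)"
    and disjoint_blocks: "t \<noteq> t' \<Longrightarrow> B t \<inter> B t' = {}"
    and card_block: "i < m \<Longrightarrow> card (B (\<tau> i)) = s"
    and block_holes: "a \<in> B t \<Longrightarrow> a \<in> {..<r} \<rightarrow>\<^sub>E UNIV \<and> a (fst t) = snd t"
begin

definition Z :: "lit set \<Rightarrow> real" where
  "Z D = fraction (typed_injections \<tau> B (pigeons D)) (\<lambda>g. satisfies g D)"

lemma Z_empty: "Z {} = 1"
  by (simp add: Z_def typed_injections_empty fraction_def)

lemma Z_nonneg: "0 \<le> Z D"
  by (simp add: Z_def fraction_nonneg)

lemma finite_typed_injections_blocks: "P \<subseteq> {..<m} \<Longrightarrow> finite (typed_injections \<tau> B P)"
  by (rule finite_typed_injections[OF finite_subset finite_block]) auto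

lemma Z_eq_fraction:
  assumes "P \<subseteq> {..<m}" "card P \<le> s" "pigeons D \<subseteq> P"
  shows "Z D = fraction (typed_injections \<tau> B P) (\<lambda>g. satisfies g D)"
  unfolding Z_def
proof (rule fraction_typed_injections_superset[symmetric, OF _ assms(3) finite_block disjoint_blocks])
  show "finite P"
    using assms(1) by (rule finite_subset) auto
  show "card {p' \<in> P. \<tau> p' = \<tau> p} \<le> card (B (\<tau> p))" if "p \<in> P" for p
  proof -
    have "card {p' \<in> P. \<tau> p' = \<tau> p} \<le> card P"
      using \<open>finite P\<close> by (intro card_mono) auto
    also have "\<dots> \<le> card (B (\<tau> p))"
      using that assms(1,2) card_block by auto
    finally show ?thesis .
  qed
  show "satisfies g D = satisfies g' D" if "\<And>p. p \<in> pigeons D \<Longrightarrow> g p = g' p" for g g'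
    using that by (rule satisfies_cong)
qed

lemma Z_falsified:
  assumes "falsifies \<tau> D"
  shows "Z D = 0"
proof -
  obtain i j b where lit: "((i, j), b) \<in> D" and \<tau>i: "\<tau> i = (j, \<not> b)"
    using assms by (auto simp: falsifies_def)
  have "\<not> satisfies g D" if "g \<in> typed_injections \<tau> B (pigeons D)" for g
  proof -
    have "i \<in> pigeons D"
      using lit by (force simp: pigeons_def)
    then have "g i \<in> B (j, \<not> b)"
      using that \<tau>i by (auto simp: typed_injections_def dest: PiE_mem)
    then have "g i j = (\<not> b)"
      using block_holes by fastforce
    then show ?thesis
      using lit satisfiesD by fastforce
  qed
  then have none: "{g \<in> typed_injections \<tau> B (pigeons D). satisfies g D} = {}"
    by blast
  show ?thesis
    unfolding Z_def fraction_def none by simp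
qed

lemma Z_neg_lift:
  assumes "i < m" "D \<subseteq> lits m r" "card (pigeons D) < s"
  shows "Z (insert ((i, j), True) D) + Z (insert ((i, j), False) D) = Z D"
proof -
  define P where "P = insert i (pigeons D)"
  have P: "P \<subseteq> {..<m}" "card P \<le> s"
    using assms pigeons_subset[OF assms(2)] finite_pigeons[OF assms(2)]
    by (auto simp: P_def card_insert_if)
  have "finite (typed_injections \<tau> B P)"
    using P(1) by (rule finite_typed_injections_blocks)
  then have "fraction (typed_injections \<tau> B P) (\<lambda>g. satisfies g (insert ((i, j), True) D))
      + fraction (typed_injections \<tau> B P) (\<lambda>g. satisfies g (insert ((i, j), False) D))
      = fraction (typed_injections \<tau> B P) (\<lambda>g. satisfies g D)"
    using fraction_conj_add[where \<Psi>="\<lambda>g. g i j" and \<Phi>="\<lambda>g. satisfies g D"] by simp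
  moreover have "pigeons D \<subseteq> P" "pigeons (insert ((i, j), b) D) \<subseteq> P" for b
    by (auto simp: P_def)
  ultimately show ?thesis
    by (simp add: Z_eq_fraction[OF P])
qed

lemma Z_insert_le:
  assumes "l \<in> lits m r" "D \<subseteq> lits m r" "card (pigeons D) < s"
  shows "Z (insert l D) \<le> Z D"
proof -
  obtain i j b where l: "l = ((i, j), b)" and "i < m"
    using assms(1) by (auto simp: lits_def)
  define P where "P = insert i (pigeons D)"
  have P: "P \<subseteq> {..<m}" "card P \<le> s"
    using \<open>i < m\<close> assms pigeons_subset[OF assms(2)] finite_pigeons[OF assms(2)]
    by (auto simp: P_def card_insert_if)
  have "finite (typed_injections \<tau> B P)"
    using P(1) by (rule finite_typed_injections_blocks)
  then have "fraction (typed_injections \<tau> B P) (\<lambda>g. satisfies g (insert l D))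
      \<le> fraction (typed_injections \<tau> B P) (\<lambda>g. satisfies g D)"
    by (rule fraction_mono) (simp add: l)
  moreover have "pigeons D \<subseteq> P" "pigeons (insert l D) \<subseteq> P"
    by (auto simp: P_def l)
  ultimately show ?thesis
    by (simp add: Z_eq_fraction[OF P])
qed

lemma Z_clause_lift:
  assumes "bphp_clause m r C" "D \<subseteq> lits m r" "card (pigeons D) + 2 \<le> s"
  shows "Z D \<le> (\<Sum>l\<in>C. Z (insert l D))"
proof -
  obtain a i i' where ii': "i < m" "i' < m" "i \<noteq> i'"
    and C: "C = {((i, j), \<not> a j) | j. j < r} \<union> {((i', j), \<not> a j) | j. j < r}"
    using assms(1) unfolding bphp_clause_def by blast
  define P where "P = insert i (insert i' (pigeons D))"
  have P: "P \<subseteq> {..<m}" "card P \<le> s"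
    using ii' assms pigeons_subset[OF assms(2)] finite_pigeons[OF assms(2)]
    by (auto simp: P_def card_insert_if)
  have "finite (typed_injections \<tau> B P)"
    using P(1) by (rule finite_typed_injections_blocks)
  moreover have "finite C"
    unfolding C by simp
  moreover have "\<exists>l\<in>C. satisfies g (insert l D)"
    if g: "g \<in> typed_injections \<tau> B P" "satisfies g D" for g
  proof -
    have "g i \<noteq> g i'"
      using g(1) ii'(3) by (auto simp: typed_injections_def P_def inj_on_def)
    moreover have "g i \<in> B (\<tau> i)" "g i' \<in> B (\<tau> i')"
      using g(1) by (auto simp: typed_injections_def P_def)
    then have "g i \<in> {..<r} \<rightarrow>\<^sub>E UNIV" "g i' \<in> {..<r} \<rightarrow>\<^sub>E UNIV"
      using block_holes by auto
    ultimately obtain j where "j < r" "g i j \<noteq> g i' j"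
      using PiE_ext by blast
    then obtain k where "g k j = (\<not> a j)" "((k, j), \<not> a j) \<in> C"
      unfolding C by (cases "g i j = a j") auto
    then show ?thesis
      using g(2) by (intro bexI[of _ "((k, j), \<not> a j)"]) auto
  qed
  ultimately have "fraction (typed_injections \<tau> B P) (\<lambda>g. satisfies g D)
      \<le> (\<Sum>l\<in>C. fraction (typed_injections \<tau> B P) (\<lambda>g. satisfies g (insert l D)))"
    by (rule fraction_le_sum)
  moreover have "pigeons (insert l D) \<subseteq> P" if "l \<in> C" for l
    using that unfolding C P_def by auto
  moreover have "pigeons D \<subseteq> P"
    by (auto simp: P_def)
  ultimately show ?thesis
    by (simp add: Z_eq_fraction[OF P])
qed

lemma sa_sat_Z:
  assumes "sa_valid m r c"
    and "card (pigeons (lifting_set c)) + 2 \<le> s \<or> falsifies \<tau> (lifting_set c)"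
  shows "sa_sat Z c"
proof (cases "falsifies \<tau> (lifting_set c)")
  case True
  then show ?thesis
    by (intro sa_sat_if_vanishing Z_falsified) (erule falsifies_mono[OF _ lifting_set_subset])
next
  case False
  then have small: "card (pigeons (lifting_set c)) + 2 \<le> s"
    using assms(2) by blast
  show ?thesis
  proof (cases c)
    case (ClauseLift C D)
    then show ?thesis
      using assms(1) small by (simp add: Z_clause_lift)
  next
    case (NegLift v D)
    then show ?thesis
      using assms(1) small by (cases v) (simp add: Z_neg_lift)
  next
    case (BoundLift l D)
    then show ?thesis
      using assms(1) small by (simp add: Z_insert_le Z_nonneg)
  qed
qed

end

section \<open>Hole blocks and random restrictions\<close>

lemma disjoint_subsets_exist:
  assumes "finite I" "\<And>i. i \<in> I \<Longrightarrow> finite (X i)" "\<And>i. i \<in> I \<Longrightarrow> card I * s \<le> card (X i)"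
  shows "\<exists>B. (\<forall>i\<in>I. B i \<subseteq> X i \<and> card (B i) = s) \<and> (\<forall>i. i \<notin> I \<longrightarrow> B i = {})
    \<and> (\<forall>i j. i \<noteq> j \<longrightarrow> B i \<inter> B j = {})"
  using assms
proof (induction I rule: finite_induct)
  case empty
  show ?case
    by (intro exI[of _ "\<lambda>_. {}"]) simp
next
  case (insert x F)
  have "card F * s \<le> card (X i)" if "i \<in> F" for i
    using insert.prems(2)[of i] that insert.hyps by (simp add: le_trans[OF mult_le_mono1])
  then obtain B where B: "\<forall>i\<in>F. B i \<subseteq> X i \<and> card (B i) = s" "\<forall>i. i \<notin> F \<longrightarrow> B i = {}"
      "\<forall>i j. i \<noteq> j \<longrightarrow> B i \<inter> B j = {}"
    using insert by auto
  define U where "U = (\<Union>i\<in>F. B i)"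
  have U: "B i \<subseteq> U" for i
    using B(2) by (cases "i \<in> F") (auto simp: U_def)
  have "card U \<le> (\<Sum>i\<in>F. card (B i))"
    unfolding U_def using insert.hyps(1) by (rule card_UN_le)
  also have "\<dots> = card F * s"
    using B(1) by simp
  finally have "s \<le> card (X x) - card U"
    using insert.prems(2)[of x] insert.hyps by simp
  also have "\<dots> \<le> card (X x - U)"
  proof (rule diff_card_le_card_Diff)
    show "finite U"
      unfolding U_def using insert.hyps(1) B(1) insert.prems(1)
      by (intro finite_UN_I) (auto intro: rev_finite_subset)
  qed
  finally obtain Bx where Bx: "Bx \<subseteq> X x - U" "card Bx = s"
    by (meson obtain_subset_with_card_n)
  have Bx_disjoint: "Bx \<inter> B j = {}" for j
    using Bx(1) U[of j] by blast
  have "(B(x := Bx)) i \<inter> (B(x := Bx)) j = {}" if "i \<noteq> j" for i j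
    using that B(3) Bx_disjoint[of i] Bx_disjoint[of j]
    by (cases "i = x"; cases "j = x") (auto simp: Int_commute)
  moreover have "\<forall>i\<in>insert x F. (B(x := Bx)) i \<subseteq> X i \<and> card ((B(x := Bx)) i) = s"
    using B(1) Bx by auto
  moreover have "\<forall>i. i \<notin> insert x F \<longrightarrow> (B(x := Bx)) i = {}"
    using B(2) by simp
  ultimately show ?case
    by blast
qed

lemma card_cube_slice:
  assumes "j < r"
  shows "card {a \<in> {..<r} \<rightarrow>\<^sub>E (UNIV :: bool set). a j = b} = 2 ^ (r - 1)"
proof -
  have "{a \<in> {..<r} \<rightarrow>\<^sub>E UNIV. a j = b} = (\<Pi>\<^sub>E i\<in>{..<r}. if i = j then {b} else UNIV)"
  proof (intro equalityI subsetI)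
    fix a assume "a \<in> (\<Pi>\<^sub>E i\<in>{..<r}. if i = j then {b} else (UNIV :: bool set))"
    moreover from this have "a j \<in> (if j = j then {b} else UNIV)"
      by (rule PiE_mem) (simp add: assms)
    ultimately show "a \<in> {a \<in> {..<r} \<rightarrow>\<^sub>E UNIV. a j = b}"
      by (simp add: PiE_iff)
  qed (auto simp: PiE_iff)
  then have "card {a \<in> {..<r} \<rightarrow>\<^sub>E (UNIV :: bool set). a j = b}
      = (\<Prod>i<r. card (if i = j then {b} else (UNIV :: bool set)))"
    by (simp add: card_PiE)
  also have "\<dots> = (\<Prod>i<r. if i = j then 1 else 2)"
    by (rule prod.cong) auto
  also have "\<dots> = 2 ^ card ({..<r} - {j})"
    by (simp add: prod.If_cases Diff_eq)
  finally show ?thesis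
    using assms by simp
qed

lemma php_blocks_exist:
  assumes "4 * r * s \<le> 2 ^ r" "\<tau> \<in> {..<m} \<rightarrow>\<^sub>E {..<r} \<times> UNIV"
  obtains B where "php_blocks m r s \<tau> B"
proof -
  define X where "X t = {a \<in> {..<r} \<rightarrow>\<^sub>E (UNIV :: bool set). a (fst t) = snd t}" for t :: "nat \<times> bool"
  have "card ({..<r} \<times> (UNIV :: bool set)) * s \<le> card (X t)" if "t \<in> {..<r} \<times> UNIV" for t
    using that assms(1) by (cases r) (auto simp: X_def card_cube_slice card_cartesian_product algebra_simps)
  moreover have finite_X: "finite (X t)" for t
    unfolding X_def by (rule finite_subset[of _ "{..<r} \<rightarrow>\<^sub>E UNIV"]) (auto intro: finite_PiE)
  ultimately obtain B where B: "\<forall>t\<in>{..<r} \<times> UNIV. B t \<subseteq> X t \<and> card (B t) = s"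
      "\<forall>t. t \<notin> {..<r} \<times> UNIV \<longrightarrow> B t = {}" "\<forall>t t'. t \<noteq> t' \<longrightarrow> B t \<inter> B t' = {}"
    using disjoint_subsets_exist[of "{..<r} \<times> UNIV" X s] by auto
  have "php_blocks m r s \<tau> B"
  proof
    show "finite (B t)" for t
    proof (cases "t \<in> {..<r} \<times> UNIV")
      case True
      then show ?thesis
        using B(1) by (intro finite_subset[OF _ finite_X[of t]]) auto
    next
      case False
      then have "B t = {}"
        using B(2) by blast
      then show ?thesis
        by simp
    qed
    show "a \<in> {..<r} \<rightarrow>\<^sub>E UNIV \<and> a (fst t) = snd t" if "a \<in> B t" for t a
    proof -
      have "t \<in> {..<r} \<times> UNIV"
        using that B(2) by blast
      then have "a \<in> X t"
        using that B(1) by blast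
      then show ?thesis
        by (simp add: X_def)
    qed
    show "B t \<inter> B t' = {}" if "t \<noteq> t'" for t t'
      using B(3) that by blast
    show "card (B (\<tau> i)) = s" if "i < m" for i
    proof -
      have "\<tau> i \<in> {..<r} \<times> UNIV"
        using assms(2) that by (auto simp: PiE_iff)
      then show ?thesis
        using B(1) by (cases "\<tau> i") auto
    qed
  qed
  then show ?thesis
    by (rule that)
qed

lemma card_not_falsifying:
  assumes "D \<subseteq> lits m r"
  shows "card {\<tau> \<in> {..<m} \<rightarrow>\<^sub>E {..<r} \<times> UNIV. \<not> falsifies \<tau> D}
    \<le> (2 * r - 1) ^ card (pigeons D) * (2 * r) ^ (m - card (pigeons D))"
proof -
  let ?types = "{..<r} \<times> (UNIV :: bool set)"
  define forbidden where "forbidden i = {(j, \<not> b) | j b. ((i, j), b) \<in> D}" for i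
  have "{\<tau> \<in> {..<m} \<rightarrow>\<^sub>E ?types. \<not> falsifies \<tau> D} \<subseteq> (\<Pi>\<^sub>E i\<in>{..<m}. ?types - forbidden i)"
  proof (intro subsetI PiE_I)
    fix \<tau> i assume "\<tau> \<in> {\<tau> \<in> {..<m} \<rightarrow>\<^sub>E ?types. \<not> falsifies \<tau> D}"
    then have \<tau>: "\<tau> \<in> {..<m} \<rightarrow>\<^sub>E ?types" "\<not> falsifies \<tau> D"
      by auto
    show "\<tau> i \<in> ?types - forbidden i" if "i \<in> {..<m}"
    proof
      show "\<tau> i \<in> ?types"
        using \<tau>(1) that by (rule PiE_mem)
      show "\<tau> i \<notin> forbidden i"
        using \<tau>(2) unfolding falsifies_def forbidden_def by blast
    qed
    show "\<tau> i = undefined" if "i \<notin> {..<m}"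
      using \<tau>(1) that by (rule PiE_arb)
  qed
  then have "card {\<tau> \<in> {..<m} \<rightarrow>\<^sub>E ?types. \<not> falsifies \<tau> D}
      \<le> card (\<Pi>\<^sub>E i\<in>{..<m}. ?types - forbidden i)"
    by (intro card_mono finite_PiE) auto
  also have "\<dots> = (\<Prod>i<m. card (?types - forbidden i))"
    by (simp add: card_PiE)
  also have "\<dots> \<le> (\<Prod>i<m. if i \<in> pigeons D then 2 * r - 1 else 2 * r)"
  proof (rule prod_mono, safe)
    fix i
    show "card (?types - forbidden i) \<le> (if i \<in> pigeons D then 2 * r - 1 else 2 * r)"
    proof (cases "i \<in> pigeons D")
      case True
      then obtain j b where "((i, j), b) \<in> D"
        by (force simp: pigeons_def)
      then have jb: "(j, \<not> b) \<in> ?types \<inter> forbidden i"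
        using assms by (auto simp: forbidden_def lits_def)
      then have "card (?types - forbidden i) \<le> card (?types - {(j, \<not> b)})"
        by (intro card_mono) auto
      then show ?thesis
        using True jb by (simp add: card_cartesian_product card_Diff_singleton)
    next
      case False
      have "card (?types - forbidden i) \<le> card ?types"
        by (intro card_mono) auto
      then show ?thesis
        using False by (simp add: card_cartesian_product)
    qed
  qed
  also have "\<dots> = (2 * r - 1) ^ card (pigeons D) * (2 * r) ^ (m - card (pigeons D))"
  proof -
    have "{..<m} \<inter> pigeons D = pigeons D"
      using pigeons_subset[OF assms] by blast
    moreover have "card ({..<m} - pigeons D) = m - card (pigeons D)"
      using pigeons_subset[OF assms] finite_pigeons[OF assms] by (simp add: card_Diff_subset)
    ultimately show ?thesis
      by (simp add: prod.If_cases Diff_eq)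
  qed
  finally show ?thesis .
qed

lemma restriction_falsifying_all_exists:
  assumes "1 \<le> r" "finite W" "\<And>D. D \<in> W \<Longrightarrow> D \<subseteq> lits m r \<and> k \<le> card (pigeons D)"
    and "real (card W) * (1 - 1 / (2 * real r)) ^ k < 1"
  obtains \<tau> where "\<tau> \<in> {..<m} \<rightarrow>\<^sub>E {..<r} \<times> UNIV" "\<And>D. D \<in> W \<Longrightarrow> falsifies \<tau> D"
proof -
  let ?\<Omega> = "{..<m} \<rightarrow>\<^sub>E {..<r} \<times> (UNIV :: bool set)"
  let ?q = "1 - 1 / (2 * real r)"
  have q: "0 \<le> ?q" "?q \<le> 1" "real (2 * r - 1) = 2 * real r * ?q"
    using assms(1) by (auto simp: field_simps of_nat_diff)
  have "real (card {\<tau> \<in> ?\<Omega>. \<not> falsifies \<tau> D}) \<le> (2 * real r) ^ m * ?q ^ k" if "D \<in> W" for D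
  proof -
    define p where "p = card (pigeons D)"
    have D: "D \<subseteq> lits m r" "k \<le> p"
      using assms(3)[OF that] by (auto simp: p_def)
    have "p \<le> m"
      using card_mono[OF _ pigeons_subset[OF D(1)]] by (simp add: p_def)
    have "real (card {\<tau> \<in> ?\<Omega>. \<not> falsifies \<tau> D}) \<le> real ((2 * r - 1) ^ p * (2 * r) ^ (m - p))"
      using card_not_falsifying[OF D(1)] by (simp only: p_def of_nat_le_iff)
    also have "\<dots> = (2 * real r) ^ (p + (m - p)) * ?q ^ p"
      unfolding of_nat_mult of_nat_power q(3) by (simp add: power_mult_distrib power_add)
    also have "\<dots> = (2 * real r) ^ m * ?q ^ p"
      using \<open>p \<le> m\<close> by simp
    also have "\<dots> \<le> (2 * real r) ^ m * ?q ^ k"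
      using D(2) q(1,2) by (intro mult_left_mono power_decreasing) auto
    finally show ?thesis .
  qed
  note survivors_bound = this
  let ?bad = "\<Union>D\<in>W. {\<tau> \<in> ?\<Omega>. \<not> falsifies \<tau> D}"
  have "card ?bad \<le> (\<Sum>D\<in>W. card {\<tau> \<in> ?\<Omega>. \<not> falsifies \<tau> D})"
    using assms(2) by (rule card_UN_le)
  then have "real (card ?bad) \<le> (\<Sum>D\<in>W. real (card {\<tau> \<in> ?\<Omega>. \<not> falsifies \<tau> D}))"
    unfolding of_nat_sum[symmetric] of_nat_le_iff .
  also have "\<dots> \<le> (\<Sum>D\<in>W. (2 * real r) ^ m * ?q ^ k)"
    using survivors_bound by (rule sum_mono)
  also have "\<dots> < (2 * real r) ^ m"
    using assms(1,4) by simp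
  also have "\<dots> = real (card ?\<Omega>)"
    by (simp add: card_PiE card_cartesian_product)
  finally have "card ?bad < card ?\<Omega>"
    by linarith
  then have "?bad \<noteq> ?\<Omega>"
    by auto
  moreover have "?bad \<subseteq> ?\<Omega>"
    by blast
  ultimately obtain \<tau> where "\<tau> \<in> ?\<Omega>" "\<tau> \<notin> ?bad"
    by blast
  then show ?thesis
    using that by blast
qed

section \<open>Counting terms of refutations\<close>

lemma sa_terms_subset_lits:
  assumes "sa_valid m r c" "X \<in> sa_terms c"
  shows "X \<subseteq> lits m r"
proof (cases c)
  case (ClauseLift C D)
  then have "bphp_clause m r C"
    using assms(1) by simp
  then have "C \<subseteq> lits m r"
    unfolding bphp_clause_def lits_def by blast
  then show ?thesis
    using assms ClauseLift by auto
qed (use assms in \<open>auto simp: lits_def\<close>)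

lemma finite_sa_terms:
  assumes "\<forall>c\<in>S. sa_valid m r c"
  shows "finite (\<Union>c\<in>S. sa_terms c)"
proof (rule finite_subset)
  show "(\<Union>c\<in>S. sa_terms c) \<subseteq> Pow (lits m r)"
    using assms sa_terms_subset_lits by blast
qed (simp add: finite_lits)

lemma sa_terms_nonempty_member:
  assumes "sa_valid m r c" "1 \<le> r"
  shows "\<exists>X\<in>sa_terms c. X \<noteq> {}"
proof (cases c)
  case (ClauseLift C D)
  then have "bphp_clause m r C"
    using assms(1) by simp
  then obtain a i i' where "C = {((i, j), \<not> a j) | j. j < r} \<union> {((i', j), \<not> a j) | j. j < r}"
    unfolding bphp_clause_def by blast
  then have "((i, 0), \<not> a 0) \<in> C"
    using assms(2) by auto
  then show ?thesis
    using ClauseLift by auto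
qed auto

lemma sa_refutation_empty_term:
  assumes "sa_refutation m r S"
  shows "{} \<in> (\<Union>c\<in>S. sa_terms c)"
proof (rule ccontr)
  assume no_empty: "{} \<notin> (\<Union>c\<in>S. sa_terms c)"
  have "\<forall>c\<in>S. sa_sat (\<lambda>X. if X = {} then 1 else 0) c"
  proof
    fix c assume "c \<in> S"
    show "sa_sat (\<lambda>X. if X = {} then 1 else 0) c"
    proof (rule sa_sat_if_vanishing)
      fix X assume "X \<in> sa_terms c"
      then have "X \<noteq> {}"
        using \<open>c \<in> S\<close> no_empty by blast
      then show "(if X = {} then 1 else 0) = (0::real)"
        by simp
    qed
  qed
  then show False
    using assms unfolding sa_refutation_def by (metis (mono_tags, lifting))
qed

lemma sa_num_terms_pos:
  assumes "sa_refutation m r S"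
  shows "1 \<le> sa_num_terms S"
  using sa_refutation_empty_term[OF assms] finite_sa_terms[of S m r] assms
  by (auto simp: sa_num_terms_def sa_refutation_def card_gt_0_iff Suc_le_eq)

lemma sa_num_terms_ge_two:
  assumes "sa_refutation m r S" "1 \<le> r"
  shows "2 \<le> sa_num_terms S"
proof -
  let ?T = "\<Union>c\<in>S. sa_terms c"
  have valid: "\<forall>c\<in>S. sa_valid m r c"
    using assms(1) by (simp add: sa_refutation_def)
  obtain c where "c \<in> S" "{} \<in> sa_terms c"
    using sa_refutation_empty_term[OF assms(1)] by blast
  moreover obtain X where "X \<in> sa_terms c" "X \<noteq> {}"
    using sa_terms_nonempty_member valid calculation(1) assms(2) by blast
  ultimately have "{{}, X} \<subseteq> ?T"
    by blast
  then have "card {{}, X} \<le> card ?T"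
    using finite_sa_terms[OF valid] by (rule card_mono[rotated])
  then show ?thesis
    using \<open>X \<noteq> {}\<close> by (simp add: sa_num_terms_def)
qed

theorem sa_num_terms_ge_exp:
  assumes ref: "sa_refutation m r S" and "1 \<le> r" and room: "4 * r * (k + 1) \<le> 2 ^ r"
  shows "exp (real k / (2 * real r)) \<le> real (sa_num_terms S)"
proof (rule ccontr)
  let ?T = "\<Union>c\<in>S. sa_terms c"
  assume "\<not> ?thesis"
  then have few: "real (card ?T) < exp (real k / (2 * real r))"
    by (simp add: sa_num_terms_def)
  have valid: "\<forall>c\<in>S. sa_valid m r c"
    using ref by (simp add: sa_refutation_def)
  define W where "W = {D \<in> ?T. k \<le> card (pigeons D)}"
  have W_sub: "W \<subseteq> ?T"
    by (auto simp: W_def)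
  have finite_W: "finite W"
    using W_sub finite_sa_terms[OF valid] by (rule finite_subset)
  have W_lits: "D \<subseteq> lits m r \<and> k \<le> card (pigeons D)" if "D \<in> W" for D
    using that valid sa_terms_subset_lits unfolding W_def by blast
  have W_small: "real (card W) * (1 - 1 / (2 * real r)) ^ k < 1"
  proof -
    have "(1 - 1 / (2 * real r)) ^ k \<le> exp (- 1 / (2 * real r)) ^ k"
      using \<open>1 \<le> r\<close> exp_ge_add_one_self[of "- 1 / (2 * real r)"] by (intro power_mono) auto
    also have "\<dots> = exp (- real k / (2 * real r))"
      by (simp add: exp_of_nat_mult[symmetric])
    finally have "real (card W) * (1 - 1 / (2 * real r)) ^ k \<le> real (card ?T) * exp (- real k / (2 * real r))"
      using card_mono[OF finite_sa_terms[OF valid] W_sub] \<open>1 \<le> r\<close> by (intro mult_mono) auto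
    also have "\<dots> < exp (real k / (2 * real r)) * exp (- real k / (2 * real r))"
      using few by simp
    also have "\<dots> = 1"
      by (simp flip: exp_add)
    finally show ?thesis .
  qed
  obtain \<tau> where \<tau>: "\<tau> \<in> {..<m} \<rightarrow>\<^sub>E {..<r} \<times> UNIV" "\<And>D. D \<in> W \<Longrightarrow> falsifies \<tau> D"
    using restriction_falsifying_all_exists[OF \<open>1 \<le> r\<close> finite_W W_lits W_small] by blast
  obtain B where "php_blocks m r (k + 1) \<tau> B"
    using php_blocks_exist[OF room \<tau>(1)] .
  then interpret php_blocks m r "k + 1" \<tau> B .
  have "sa_sat Z c" if "c \<in> S" for c
  proof (rule sa_sat_Z)
    show "sa_valid m r c"
      using valid that by blast
    have "lifting_set c \<in> ?T"
      using that lifting_set_in_sa_terms by blast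
    then show "card (pigeons (lifting_set c)) + 2 \<le> k + 1 \<or> falsifies \<tau> (lifting_set c)"
      using \<tau>(2) by (force simp: W_def)
  qed
  then show False
    using ref Z_empty by (auto simp: sa_refutation_def)
qed

lemma block_size_exists:
  assumes "6 \<le> r"
  obtains k :: nat where "4 * r * (k + 1) \<le> 2 ^ r" "2 ^ r / (32 * real r ^ 2) \<le> k / (2 * real r)"
proof
  define s where "s = 2 ^ r div (4 * r)"
  have "8 * r \<le> 2 ^ r"
    using assms by (induction r rule: dec_induct) auto
  then have "2 \<le> s"
    using assms by (simp add: s_def less_eq_div_iff_mult_less_eq)
  have "(2::nat) ^ r mod (4 * r) < 4 * r"
    using assms by simp
  then have "2 ^ r < 4 * (r * s) + 4 * r"
    using div_mult_mod_eq[of "2 ^ r" "4 * r"] by (simp add: s_def algebra_simps)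
  moreover have "2 * r \<le> r * s"
    using \<open>2 \<le> s\<close> by simp
  moreover have "16 * r * (s - 1) = 16 * (r * s) - 16 * r"
    by (simp add: algebra_simps diff_mult_distrib2)
  ultimately have "real (2 ^ r) \<le> real (16 * r * (s - 1))"
    unfolding of_nat_le_iff by linarith
  then show "2 ^ r / (32 * real r ^ 2) \<le> real (s - 1) / (2 * real r)"
    using assms by (simp add: field_simps power2_eq_square)
  show "4 * r * (s - 1 + 1) \<le> 2 ^ r"
    using \<open>2 \<le> s\<close> times_div_less_eq_dividend[of "4 * r" "2 ^ r"] by (simp add: s_def)
qed

lemma small_bound_le_half:
  assumes "1 \<le> r" "r \<le> 5"
  shows "2 ^ r / (32 * real r ^ 2) \<le> 1 / 2"
proof -
  have "r \<in> {1, 2, 3, 4, 5}"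
    using assms by auto
  then have "(2::nat) ^ r \<le> 16 * r ^ 2"
    by auto
  then have "real (2 ^ r) \<le> real (16 * r ^ 2)"
    by (simp only: of_nat_le_iff)
  then show ?thesis
    using assms by (simp add: field_simps)
qed

theorem corollary7:
  fixes m n r :: nat and S :: "sa_constr set"
  assumes "n = 2 ^ r" and "m > n" and "sa_refutation m r S"
  shows "exp (real n / (32 * (log 2 (real n))\<^sup>2)) \<le> real (sa_num_terms S)"
proof -
  have bound: "real n / (32 * (log 2 (real n))\<^sup>2) = 2 ^ r / (32 * real r ^ 2)"
    using assms(1) by simp
  consider "r = 0" | "1 \<le> r" "r \<le> 5" | "6 \<le> r"
    by linarith
  then show ?thesis
  proof cases
    case 1
    \<comment> \<open>\<open>log 2 n = 0\<close>, so the bound is \<open>exp (n / 0) = exp 0 = 1\<close>.\<close>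
    then show ?thesis
      using sa_num_terms_pos[OF assms(3)] by (simp add: bound)
  next
    case 2
    have "exp (2 ^ r / (32 * real r ^ 2)) \<le> exp (1 / 2)"
      using small_bound_le_half[OF 2] by simp
    also have "\<dots> \<le> real (sa_num_terms S)"
      using exp_half_le2 sa_num_terms_ge_two[OF assms(3) 2(1)] by simp
    finally show ?thesis
      by (simp add: bound)
  next
    case 3
    then obtain k where k: "4 * r * (k + 1) \<le> 2 ^ r" "2 ^ r / (32 * real r ^ 2) \<le> k / (2 * real r)"
      by (rule block_size_exists)
    then have "exp (2 ^ r / (32 * real r ^ 2)) \<le> exp (k / (2 * real r))"
      by simp
    also have "\<dots> \<le> real (sa_num_terms S)"
      using sa_num_terms_ge_exp[OF assms(3) _ k(1)] 3 by simp
    finally show ?thesis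
      by (simp add: bound)
  qed
qed

end
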